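(* $\mathfrak{Z}(\mathcal{S})\leq(2^{\aleph_0})^+$; that is, every separable LMP $\mathbb{S}$ satisfies $\mathfrak{Z}(\mathbb{S})\leq(2^{\aleph_0})^+$.
   Context: An LMP is a triple $\mathbb{S}=(S,\Sigma,\{\tau_a\mid a\in L\})$ with $(S,\Sigma)$ a measurable space, $L$ a countable label set, and each $\tau_a:S\times\Sigma\to[0,1]$ a Markov kernel (subprobability measure in the second argument, measurable in the first). It is separable if $\Sigma$ is countably generated and separates points of $S$. For $R\subseteq S\times S$, $\Sigma(R)$ is the family of $R$-closed sets in $\Sigma$ ($A$ is $R$-closed if $x\in A$, $xRs$ imply $s\in A$). $\mathcal{R}(\Gamma)=\{(s,t):\forall A\in\Gamma\,(s\in A\iff t\in A)\}$; $\mathcal{R}^T(\Lambda)=\{(s,t):\forall a\,\forall E\in\Lambda\ \tau_a(s,E)=\tau_a(t,E)\}$; $\mathcal{O}(R)=\mathcal{R}^T(\Sigma(R))$, with iterates $\mathcal{O}^0(R)=R$, $\mathcal{O}^{\alpha+1}(R)=\mathcal{O}(\mathcal{O}^\alpha(R))$, $\mathcal{O}^\lambda(R)=\bigcap_{\alpha<\lambda}\mathcal{O}^\alpha(R)$ for limit $\lambda$. Event bisimilarity ${\sim_e}=\mathcal{R}(\sigma(\llbracket\mathcal{L}\rrbracket))$, where $\sigma(\llbracket\mathcal{L}\rrbracket)$ is the $\sigma$-algebra generated by the denotations of formulas $\phi::=\top\mid\phi\wedge\psi\mid\langle a\rangle_{>q}\phi$ ($q\in\mathbb{Q}\cap[0,1]$),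 $\llbracket\langle a\rangle_{>q}\phi\rrbracket=\{s:\tau_a(s,\llbracket\phi\rrbracket)>q\}$. A state bisimulation is a symmetric $R$ with $sRt$, $C\in\Sigma(R)$ implying $\tau_a(s,C)=\tau_a(t,C)$ for all $a$; state bisimilarity $\sim_s$ is the union of all state bisimulations. The Zhou ordinal $\mathfrak{Z}(\mathbb{S})$ is the least $\alpha$ with $\mathcal{O}^\alpha(\sim_e)={\sim_s}$ (it exists). $\mathfrak{Z}(\mathcal{S})$ is the supremum of $\mathfrak{Z}(\mathbb{S})$ over all separable LMPs $\mathbb{S}$. *)

theory Defs
  imports "HOL-Probability.Probability"
begin

text \<open>The value tau_a(s,E) is measure (tau a s) E.\<close>

definition LMP :: "'s measure \<Rightarrow> ('l::countable \<Rightarrow> 's \<Rightarrow> 's measure) \<Rightarrow> bool" where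
  "LMP M tau \<longleftrightarrow> (\<forall>a. tau a \<in> M \<rightarrow>\<^sub>M subprob_algebra M)"

definition separable_LMP :: "'s measure \<Rightarrow> ('l::countable \<Rightarrow> 's \<Rightarrow> 's measure) \<Rightarrow> bool" where
  "separable_LMP M tau \<longleftrightarrow> LMP M tau
     \<and> (\<exists>G. countable G \<and> G \<subseteq> Pow (space M) \<and> sets M = sigma_sets (space M) G)
     \<and> (\<forall>x\<in>space M. \<forall>y\<in>space M. x \<noteq> y \<longrightarrow> (\<exists>A\<in>sets M. (x \<in> A) \<noteq> (y \<in> A)))"

definition closed_sets :: "'s measure \<Rightarrow> ('s \<times> 's) set \<Rightarrow> 's set set" where
  "closed_sets M R = {A \<in> sets M. \<forall>x s. x \<in> A \<and> (x, s) \<in> R \<longrightarrow> s \<in> A}"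

definition rel_of_sets :: "'s measure \<Rightarrow> 's set set \<Rightarrow> ('s \<times> 's) set" where
  "rel_of_sets M \<Gamma> = {(s, t). s \<in> space M \<and> t \<in> space M \<and> (\<forall>A\<in>\<Gamma>. s \<in> A \<longleftrightarrow> t \<in> A)}"

definition rel_T :: "'s measure \<Rightarrow> ('l \<Rightarrow> 's \<Rightarrow> 's measure) \<Rightarrow> 's set set \<Rightarrow> ('s \<times> 's) set" where
  "rel_T M tau \<Lambda> = {(s, t). s \<in> space M \<and> t \<in> space M \<and>
      (\<forall>a. \<forall>E\<in>\<Lambda>. measure (tau a s) E = measure (tau a t) E)}"

definition Oop :: "'s measure \<Rightarrow> ('l \<Rightarrow> 's \<Rightarrow> 's measure) \<Rightarrow> ('s \<times> 's) set \<Rightarrow> ('s \<times> 's) set" where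
  "Oop M tau R = rel_T M tau (closed_sets M R)"

text \<open>Ordinals are represented by well-orders w. For a set P of indices (an initial segment
  of w) and a family G of already computed iterates (G i = O^(beta_i)(R) where beta_i is
  the order type of the strict initial segment below i), the iterate at the order type of P is:
  R if P is empty; O(G m) if P has a w-maximum m (successor case);
  the intersection of all G i, i in P, otherwise (limit case).\<close>

definition zstage :: "'s measure \<Rightarrow> ('l \<Rightarrow> 's \<Rightarrow> 's measure) \<Rightarrow> ('s \<times> 's) set \<Rightarrow> 'i rel
    \<Rightarrow> ('i \<Rightarrow> ('s \<times> 's) set) \<Rightarrow> 'i set \<Rightarrow> ('s \<times> 's) set" where
  "zstage M tau R w G P =
     (if P = {} then R
      else if (\<exists>m\<in>P. \<forall>i\<in>P. (i, m) \<in> w)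
        then Oop M tau (G (SOME m. m \<in> P \<and> (\<forall>i\<in>P. (i, m) \<in> w)))
      else \<Inter> (G ` P))"

text \<open>F is the sequence of iterates along w: F i = O^(otype of underS w i)(R).\<close>
definition zhou_iter :: "'s measure \<Rightarrow> ('l \<Rightarrow> 's \<Rightarrow> 's measure) \<Rightarrow> ('s \<times> 's) set \<Rightarrow> 'i rel
    \<Rightarrow> ('i \<Rightarrow> ('s \<times> 's) set) \<Rightarrow> bool" where
  "zhou_iter M tau R w F \<longleftrightarrow> (\<forall>i\<in>Field w. F i = zstage M tau R w F (underS w i))"

definition Opow :: "'s measure \<Rightarrow> ('l \<Rightarrow> 's \<Rightarrow> 's measure) \<Rightarrow> 'i rel \<Rightarrow> ('s \<times> 's) set
    \<Rightarrow> ('s \<times> 's) set" where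
  "Opow M tau w R = (THE X. \<exists>F. zhou_iter M tau R w F \<and> X = zstage M tau R w F (Field w))"

datatype 'l lform = LTop | LAnd "'l lform" "'l lform" | LDiam 'l rat "'l lform"

fun wf_lform :: "'l lform \<Rightarrow> bool" where
  "wf_lform LTop = True"
| "wf_lform (LAnd p q) = (wf_lform p \<and> wf_lform q)"
| "wf_lform (LDiam a q p) = (0 \<le> q \<and> q \<le> 1 \<and> wf_lform p)"

fun sem :: "'s measure \<Rightarrow> ('l \<Rightarrow> 's \<Rightarrow> 's measure) \<Rightarrow> 'l lform \<Rightarrow> 's set" where
  "sem M tau LTop = space M"
| "sem M tau (LAnd p q) = sem M tau p \<inter> sem M tau q"
| "sem M tau (LDiam a q p) = {s \<in> space M. measure (tau a s) (sem M tau p) > real_of_rat q}"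

definition event_bisim :: "'s measure \<Rightarrow> ('l \<Rightarrow> 's \<Rightarrow> 's measure) \<Rightarrow> ('s \<times> 's) set" where
  "event_bisim M tau =
     rel_of_sets M (sigma_sets (space M) {sem M tau \<phi> | \<phi>. wf_lform \<phi>})"

definition state_bisimulation :: "'s measure \<Rightarrow> ('l \<Rightarrow> 's \<Rightarrow> 's measure) \<Rightarrow> ('s \<times> 's) set \<Rightarrow> bool" where
  "state_bisimulation M tau R \<longleftrightarrow> R \<subseteq> space M \<times> space M \<and> sym R \<and>
     (\<forall>s t C a. (s, t) \<in> R \<and> C \<in> closed_sets M R \<longrightarrow> measure (tau a s) C = measure (tau a t) C)"

definition state_bisim :: "'s measure \<Rightarrow> ('l \<Rightarrow> 's \<Rightarrow> 's measure) \<Rightarrow> ('s \<times> 's) set" where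
  "state_bisim M tau = \<Union> {R. state_bisimulation M tau R}"

definition continuum_succ :: "(nat \<Rightarrow> bool) set rel" where
  "continuum_succ = cardSuc (card_of (UNIV :: (nat \<Rightarrow> bool) set))"

end

theory Submission
  imports Defs
begin

text \<open>The operator O is monotone and O(\<sim>e) \<subseteq> \<sim>e, so the iterates O^\<alpha>(\<sim>e) form a decreasing
  chain with O(O^\<alpha>) \<subseteq> O^\<alpha> and O^\<beta> \<subseteq> O(O^\<alpha>) for \<alpha> < \<beta>. Until the chain reaches a fixed
  point of O, picking a pair in O^\<alpha> - O(O^\<alpha>) for every \<alpha> is therefore injective; as the
  state space of a separable LMP has at most 2^\<aleph>0 points, a fixed point is reached before
  (2^\<aleph>0)^+. A fixed point of O is a state bisimulation, while every state bisimulation is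
  contained in \<sim>e and is preserved by O, hence lies below every iterate: the fixed point is \<sim>s.\<close>

unbundle cardinal_syntax

lemma underS_induct [consumes 2, case_names step]:
  assumes "Well_order w" and "x \<in> Field w"
    and "\<And>x. x \<in> Field w \<Longrightarrow> (\<And>y. y \<in> underS w x \<Longrightarrow> Q y) \<Longrightarrow> Q x"
  shows "Q x"
proof -
  have "x \<in> Field w \<longrightarrow> Q x"
  proof (rule wo_rel.well_order_induct[of w])
    show "wo_rel w" using assms(1) by (simp add: wo_rel_def)
  next
    fix x assume IH: "\<forall>y. y \<noteq> x \<and> (y, x) \<in> w \<longrightarrow> y \<in> Field w \<longrightarrow> Q y"
    show "x \<in> Field w \<longrightarrow> Q x"
    proof
      assume "x \<in> Field w"
      moreover have "Q y" if "y \<in> underS w x" for y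
        using IH that by (auto simp: underS_def Field_def)
      ultimately show "Q x" by (rule assms(3))
    qed
  qed
  with assms(2) show ?thesis by blast
qed

lemma Well_order_underS_or_le:
  assumes "Well_order w" "i \<in> Field w" "j \<in> Field w"
  shows "i \<in> underS w j \<or> (j, i) \<in> w"
proof (cases "i = j")
  case True
  with assms have "(j, i) \<in> w" by (meson refl_onD wo_rel.REFL wo_rel_def)
  then show ?thesis ..
next
  case False
  have "(i, j) \<in> w \<or> (j, i) \<in> w"
    using assms wo_rel.TOTALS[of w] by (simp add: wo_rel_def)
  with False show ?thesis by (auto simp: underS_def)
qed

lemma zstage_cases:
  assumes "Well_order w"
  obtains (empty) "P = {}" "zstage M tau R w G P = R"
  | (succ) m where "m \<in> P" "\<forall>j\<in>P. (j, m) \<in> w" "zstage M tau R w G P = Oop M tau (G m)"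
  | (lim) "P \<noteq> {}" "\<not> (\<exists>m\<in>P. \<forall>j\<in>P. (j, m) \<in> w)" "zstage M tau R w G P = \<Inter> (G ` P)"
proof -
  consider "P = {}" | m where "m \<in> P" "\<forall>j\<in>P. (j, m) \<in> w"
    | "P \<noteq> {}" "\<not> (\<exists>m\<in>P. \<forall>j\<in>P. (j, m) \<in> w)"
    by blast
  then show ?thesis
  proof cases
    case 1
    then show ?thesis by (intro empty) (simp_all add: zstage_def)
  next
    case (2 m)
    let ?max = "\<lambda>m. m \<in> P \<and> (\<forall>j\<in>P. (j, m) \<in> w)"
    have "antisym w"
      using assms by (simp add: well_order_on_def linear_order_on_def partial_order_on_def)
    moreover have "?max (SOME m. ?max m)"
      using 2 by (intro someI[of ?max m]) blast
    ultimately have "(SOME m. ?max m) = m"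
      using 2 by (auto dest: antisymD)
    with 2 show ?thesis by (intro succ[of m]) (auto simp: zstage_def)
  next
    case 3
    then show ?thesis by (intro lim) (auto simp: zstage_def)
  qed
qed

lemma zstage_cong:
  assumes "\<forall>y\<in>P. G y = G' y"
  shows "zstage M tau R w G P = zstage M tau R w G' P"
proof (cases "\<exists>m\<in>P. \<forall>i\<in>P. (i, m) \<in> w")
  case True
  let ?m = "SOME m. m \<in> P \<and> (\<forall>i\<in>P. (i, m) \<in> w)"
  have "?m \<in> P" using someI_ex[of "\<lambda>m. m \<in> P \<and> (\<forall>i\<in>P. (i, m) \<in> w)"] True by blast
  with assms True show ?thesis by (auto simp: zstage_def)
next
  case False
  with assms show ?thesis by (auto simp: zstage_def)
qed

lemma zhou_iter_exists:
  assumes "Well_order w"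
  shows "\<exists>F. zhou_iter M tau R w F"
proof -
  interpret wo_rel w using assms by (simp add: wo_rel_def)
  define H where "H G i = zstage M tau R w G (Order_Relation.underS w i)" for G i
  have "adm_wo H" unfolding adm_wo_def H_def using zstage_cong by blast
  then have "worec H = H (worec H)" by (rule worec_fixpoint)
  then have "zhou_iter M tau R w (worec H)" by (metis H_def zhou_iter_def)
  then show ?thesis by blast
qed

lemma Oop_mono: "X \<subseteq> Y \<Longrightarrow> Oop M tau X \<subseteq> Oop M tau Y"
  unfolding Oop_def rel_T_def closed_sets_def by blast

lemma Oop_subset_space: "Oop M tau X \<subseteq> space M \<times> space M"
  unfolding Oop_def rel_T_def by auto

locale O_iteration =
  fixes M :: "'s measure" and tau :: "'l \<Rightarrow> 's \<Rightarrow> 's measure"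
    and R :: "('s \<times> 's) set" and w :: "'i rel" and F :: "'i \<Rightarrow> ('s \<times> 's) set"
  assumes well_order: "Well_order w" and iter: "zhou_iter M tau R w F"
begin

lemmas stage_cases = zstage_cases[OF well_order, of _ M tau R F, case_names empty succ lim]

lemma stage_eq: "i \<in> Field w \<Longrightarrow> F i = zstage M tau R w F (underS w i)"
  using iter unfolding zhou_iter_def by blast

lemma subset_stage:
  assumes "R0 \<subseteq> R" and Oop_preserves: "\<And>X. R0 \<subseteq> X \<Longrightarrow> R0 \<subseteq> Oop M tau X"
    and "k \<in> Field w"
  shows "R0 \<subseteq> F k"
  using well_order \<open>k \<in> Field w\<close>
proof (induction k rule: underS_induct)
  case (step k)
  note stage = stage_eq[OF step.hyps]
  show ?case
  proof (cases rule: stage_cases[of "underS w k"])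
    case empty
    with stage assms(1) show ?thesis by simp
  next
    case (succ m)
    with stage Oop_preserves step.IH show ?thesis by metis
  next
    case lim
    with stage step.IH show ?thesis by auto
  qed
qed

end

locale deflationary_O_iteration = O_iteration +
  assumes Oop_base: "Oop M tau R \<subseteq> R"
begin

lemma Oop_stage_subset: "k \<in> Field w \<Longrightarrow> Oop M tau (F k) \<subseteq> F k"
  using well_order
proof (induction k rule: underS_induct)
  case (step k)
  note stage = stage_eq[OF step.hyps]
  show ?case
  proof (cases rule: stage_cases[of "underS w k"])
    case empty
    with stage Oop_base show ?thesis by simp
  next
    case (succ m)
    with stage step.IH Oop_mono show ?thesis by metis
  next
    case lim
    have "Oop M tau (F k) \<subseteq> F j" if "j \<in> underS w k" for j
    proof -
      have "F k \<subseteq> F j" using stage lim that by auto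
      then have "Oop M tau (F k) \<subseteq> Oop M tau (F j)" by (rule Oop_mono)
      with step.IH[OF that] show ?thesis by blast
    qed
    then have "Oop M tau (F k) \<subseteq> \<Inter> (F ` underS w k)" by (intro INT_greatest)
    with stage lim show ?thesis by simp
  qed
qed

lemma stage_subset_Oop_below:
  assumes "i \<in> underS w j"
  shows "F j \<subseteq> Oop M tau (F i)"
proof -
  have "j \<in> Field w" using assms by (auto simp: underS_def Field_def)
  with well_order show ?thesis
    using assms
  proof (induction j arbitrary: i rule: underS_induct)
    case (step j)
    note stage = stage_eq[OF step.hyps]
    show ?case
    proof (cases rule: stage_cases[of "underS w j"])
      case empty
      with step.prems show ?thesis by simp
    next
      case (succ m)
      show ?thesis
      proof (cases "i = m")
        case True
        with stage succ show ?thesis by simp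
      next
        case False
        with succ step.prems have "i \<in> underS w m" by (auto simp: underS_def)
        then have "F m \<subseteq> Oop M tau (F i)" by (rule step.IH[OF succ(1)])
        moreover have "Oop M tau (F m) \<subseteq> F m"
          using succ(1) by (intro Oop_stage_subset) (auto simp: underS_def Field_def)
        ultimately show ?thesis using stage succ by simp
      qed
    next
      case lim
      \<comment> \<open>without a largest element below j, some k below j lies above i\<close>
      then obtain k where k: "k \<in> underS w j" "(k, i) \<notin> w"
        using step.prems by blast
      have "k \<in> Field w" "i \<in> Field w"
        using k(1) step.prems by (auto simp: underS_def Field_def)
      with k(2) have "i \<in> underS w k"
        using Well_order_underS_or_le[OF well_order] by blast
      then have "F k \<subseteq> Oop M tau (F i)" by (rule step.IH[OF k(1)])
      moreover have "F j \<subseteq> F k" using stage lim k(1) by auto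
      ultimately show ?thesis by blast
    qed
  qed
qed

lemma stage_antimono:
  assumes "i \<in> underS w j"
  shows "F j \<subseteq> F i"
proof -
  have "i \<in> Field w" using assms by (auto simp: underS_def Field_def)
  with assms stage_subset_Oop_below Oop_stage_subset show ?thesis by blast
qed

lemma stage_subset_base: "k \<in> Field w \<Longrightarrow> F k \<subseteq> R"
  using well_order
proof (induction k rule: underS_induct)
  case (step k)
  note stage = stage_eq[OF step.hyps]
  show ?case
  proof (cases rule: stage_cases[of "underS w k"])
    case empty
    with stage show ?thesis by simp
  next
    case (succ m)
    moreover have "m \<in> Field w" using succ(1) by (auto simp: underS_def Field_def)
    ultimately show ?thesis using stage step.IH Oop_stage_subset by blast
  next
    case lim
    then obtain j where "j \<in> underS w k" by blast
    with stage lim step.IH show ?thesis by blast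
  qed
qed

lemma card_Field_le_if_no_fixpoint:
  assumes "\<forall>i\<in>Field w. Oop M tau (F i) \<noteq> F i"
  shows "|Field w| \<le>o |R|"
proof -
  have "\<forall>i\<in>Field w. \<exists>p. p \<in> F i - Oop M tau (F i)"
    using assms Oop_stage_subset by blast
  then obtain p where p: "\<And>i. i \<in> Field w \<Longrightarrow> p i \<in> F i - Oop M tau (F i)"
    by metis
  have "inj_on p (Field w)"
  proof (rule inj_onI, rule ccontr)
    fix i j assume ij: "i \<in> Field w" "j \<in> Field w" "p i = p j" "i \<noteq> j"
    then have "i \<in> underS w j \<or> j \<in> underS w i"
      using Well_order_underS_or_le[OF well_order] by (auto simp: underS_def)
    then show False
      using ij p stage_subset_Oop_below by (metis DiffD1 DiffD2 subsetD)
  qed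
  moreover have "p ` Field w \<subseteq> R"
    using p stage_subset_base by blast
  ultimately show ?thesis by (auto simp flip: card_of_ordLeq)
qed

lemma fixpoint_subset_stage:
  assumes i: "i \<in> Field w" and fix_i: "Oop M tau (F i) = F i" and "j \<in> Field w"
  shows "F i \<subseteq> F j"
  using well_order \<open>j \<in> Field w\<close>
proof (induction j rule: underS_induct)
  case (step j)
  note stage = stage_eq[OF step.hyps]
  consider "j = i" | "j \<in> underS w i" | "i \<in> underS w j"
    using Well_order_underS_or_le[OF well_order i step.hyps] by (auto simp: underS_def)
  then show ?case
  proof cases
    case 2
    then show ?thesis by (rule stage_antimono)
  next
    case 3
    show ?thesis
    proof (cases rule: stage_cases[of "underS w j"])
      case empty
      with 3 show ?thesis by simp
    next
      case (succ m)
      then have "Oop M tau (F i) \<subseteq> Oop M tau (F m)" by (intro Oop_mono step.IH)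
      with stage succ fix_i show ?thesis by simp
    next
      case lim
      with stage step.IH show ?thesis by auto
    qed
  qed simp
qed

lemma final_stage_eq_fixpoint:
  assumes i: "i \<in> Field w" and fix_i: "Oop M tau (F i) = F i"
  shows "zstage M tau R w F (Field w) = F i"
proof (cases rule: stage_cases[of "Field w"])
  case empty
  with i show ?thesis by simp
next
  case (succ m)
  have "F i \<subseteq> F m" using fixpoint_subset_stage[OF i fix_i succ(1)] .
  moreover have "F m \<subseteq> F i"
  proof (cases "m = i")
    case False
    with succ i have "i \<in> underS w m" by (auto simp: underS_def)
    then show ?thesis by (rule stage_antimono)
  qed simp
  ultimately show ?thesis using succ fix_i by simp
next
  case lim
  with fixpoint_subset_stage[OF i fix_i] i show ?thesis by auto
qed

end

lemma sem_measurable: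
  assumes "LMP M tau"
  shows "sem M tau \<phi> \<in> sets M"
proof (induction \<phi>)
  case (LDiam a q p)
  have "tau a \<in> M \<rightarrow>\<^sub>M subprob_algebra M" using assms unfolding LMP_def by blast
  then have "(\<lambda>s. measure (tau a s) (sem M tau p)) \<in> borel_measurable M"
    using measurable_compose measurable_measure_subprob_algebra[OF LDiam] by blast
  then have "{s \<in> space M. real_of_rat q < measure (tau a s) (sem M tau p)} \<in> sets M"
    by measurable
  then show ?case by simp
qed auto

lemma event_bisim_subset_space: "event_bisim M tau \<subseteq> space M \<times> space M"
  unfolding event_bisim_def rel_of_sets_def by auto

lemma state_bisimulation_subset_event_bisim:
  assumes "LMP M tau" and SB: "state_bisimulation M tau R0"
  shows "R0 \<subseteq> event_bisim M tau"
proof -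
  have sub: "R0 \<subseteq> space M \<times> space M" and "sym R0"
    and eq: "\<And>s t C a. (s, t) \<in> R0 \<Longrightarrow> C \<in> closed_sets M R0 \<Longrightarrow>
      measure (tau a s) C = measure (tau a t) C"
    using SB unfolding state_bisimulation_def by blast+
  have sem_closed: "x \<in> sem M tau \<phi> \<Longrightarrow> (x, y) \<in> R0 \<Longrightarrow> y \<in> sem M tau \<phi>" for \<phi> x y
  proof (induction \<phi> arbitrary: x y)
    case (LDiam a q p)
    have "sem M tau p \<in> closed_sets M R0"
      using sem_measurable[OF assms(1)] LDiam.IH unfolding closed_sets_def by blast
    with eq LDiam.prems(2) have "measure (tau a x) (sem M tau p) = measure (tau a y) (sem M tau p)"
      by blast
    with LDiam.prems sub show ?case by auto
  qed (use sub in auto)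
  \<comment> \<open>symmetry of R0 is what makes R0-closed sets stable under complement\<close>
  have "(x, y) \<in> R0 \<longrightarrow> x \<in> A \<longrightarrow> y \<in> A"
    if "A \<in> sigma_sets (space M) {sem M tau \<phi> | \<phi>. wf_lform \<phi>}" for A x y
    using that
  proof (induction arbitrary: x y rule: sigma_sets.induct)
    case (Compl A)
    then show ?case using \<open>sym R0\<close> sub by (blast dest: symD)
  qed (use sem_closed in blast)+
  with \<open>sym R0\<close> sub show ?thesis
    unfolding event_bisim_def rel_of_sets_def by (blast dest: symD)
qed

lemma Oop_event_bisim_subset:
  assumes "LMP M tau"
  shows "Oop M tau (event_bisim M tau) \<subseteq> event_bisim M tau"
proof (rule subrelI)
  fix s t assume st: "(s, t) \<in> Oop M tau (event_bisim M tau)"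
  let ?S = "sigma_sets (space M) {sem M tau \<phi> | \<phi>. wf_lform \<phi>}"
  have space: "s \<in> space M" "t \<in> space M"
    and eq: "\<And>a E. E \<in> closed_sets M (event_bisim M tau) \<Longrightarrow>
      measure (tau a s) E = measure (tau a t) E"
    using st unfolding Oop_def rel_T_def by auto
  have "sem M tau \<phi> \<in> closed_sets M (event_bisim M tau)" if "wf_lform \<phi>" for \<phi>
  proof -
    have "sem M tau \<phi> \<in> ?S" using that by blast
    with sem_measurable[OF assms] show ?thesis
      unfolding closed_sets_def event_bisim_def rel_of_sets_def by blast
  qed
  then have sem_iff: "s \<in> sem M tau \<phi> \<longleftrightarrow> t \<in> sem M tau \<phi>" if "wf_lform \<phi>" for \<phi>
    using that by (induction \<phi>) (auto simp: space eq)
  have "s \<in> A \<longleftrightarrow> t \<in> A" if "A \<in> ?S" for A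
    using that by (induction rule: sigma_sets.induct) (use sem_iff space in blast)+
  with space show "(s, t) \<in> event_bisim M tau"
    unfolding event_bisim_def rel_of_sets_def by blast
qed

lemma state_bisimulation_subset_Oop:
  assumes "state_bisimulation M tau R0" and "R0 \<subseteq> X"
  shows "R0 \<subseteq> Oop M tau X"
proof -
  have "closed_sets M X \<subseteq> closed_sets M R0"
    using assms(2) unfolding closed_sets_def by blast
  with assms(1) show ?thesis
    unfolding state_bisimulation_def Oop_def rel_T_def by blast
qed

lemma state_bisimulation_if_Oop_fixpoint:
  assumes fix_X: "Oop M tau X = X"
  shows "state_bisimulation M tau X"
proof -
  have "X \<subseteq> space M \<times> space M" using Oop_subset_space[of M tau X] fix_X by simp
  moreover have "sym X"
    by (rule symI, subst (asm) fix_X[symmetric], subst fix_X[symmetric])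
      (auto simp: Oop_def rel_T_def)
  moreover have "measure (tau a s) C = measure (tau a t) C"
    if "(s, t) \<in> X" "C \<in> closed_sets M X" for s t C a
    using that by (subst (asm) fix_X[symmetric]) (auto simp: Oop_def rel_T_def)
  ultimately show ?thesis unfolding state_bisimulation_def by blast
qed

lemma final_stage_eq_state_bisim:
  assumes "LMP M tau" and "Well_order w" and "zhou_iter M tau (event_bisim M tau) w F"
    and card: "|space M \<times> space M| <o |Field w|"
  shows "zstage M tau (event_bisim M tau) w F (Field w) = state_bisim M tau"
proof -
  interpret deflationary_O_iteration M tau "event_bisim M tau" w F
    using assms Oop_event_bisim_subset by unfold_locales
  obtain i where i: "i \<in> Field w" and fix_i: "Oop M tau (F i) = F i"
  proof (rule ccontr)
    assume "\<not> thesis"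
    with that have "|Field w| \<le>o |event_bisim M tau|"
      by (blast intro: card_Field_le_if_no_fixpoint)
    moreover have "|event_bisim M tau| \<le>o |space M \<times> space M|"
      by (rule card_of_mono1[OF event_bisim_subset_space])
    ultimately show False
      using card not_ordLess_ordLeq ordLeq_transitive by blast
  qed
  have "F i \<subseteq> state_bisim M tau"
    unfolding state_bisim_def using state_bisimulation_if_Oop_fixpoint[OF fix_i] by blast
  moreover have "R0 \<subseteq> F i" if "state_bisimulation M tau R0" for R0
    using state_bisimulation_subset_event_bisim[OF assms(1) that]
      state_bisimulation_subset_Oop[OF that] i
    by (rule subset_stage)
  then have "state_bisim M tau \<subseteq> F i" unfolding state_bisim_def by blast
  ultimately show ?thesis using final_stage_eq_fixpoint[OF i fix_i] by blast
qed

lemma Opow_event_bisim_eq_state_bisim: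
  assumes "LMP M tau" and "Well_order w" and "|space M \<times> space M| <o |Field w|"
  shows "Opow M tau w (event_bisim M tau) = state_bisim M tau"
proof -
  obtain F where "zhou_iter M tau (event_bisim M tau) w F"
    using zhou_iter_exists[OF assms(2)] by blast
  with final_stage_eq_state_bisim[OF assms(1,2) _ assms(3)] show ?thesis
    unfolding Opow_def by (intro the_equality) auto
qed

lemma card_space_le_continuum:
  assumes "countable G" and gen: "sets M = sigma_sets (space M) G"
    and separating: "\<forall>x\<in>space M. \<forall>y\<in>space M. x \<noteq> y \<longrightarrow> (\<exists>A\<in>sets M. (x \<in> A) \<noteq> (y \<in> A))"
  shows "|space M| \<le>o |UNIV :: (nat \<Rightarrow> bool) set|"
proof -
  define code where "code x = (\<lambda>n. x \<in> from_nat_into G n)" for x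
  have "inj_on code (space M)"
  proof (rule inj_onI, rule ccontr)
    fix x y assume xy: "x \<in> space M" "y \<in> space M" "code x = code y" "x \<noteq> y"
    have generator_iff: "x \<in> B \<longleftrightarrow> y \<in> B" if "B \<in> G" for B
      using fun_cong[OF xy(3), of "to_nat_on G B"] \<open>countable G\<close> that by (simp add: code_def)
    have "x \<in> A \<longleftrightarrow> y \<in> A" if "A \<in> sigma_sets (space M) G" for A
      using that by (induction rule: sigma_sets.induct) (use generator_iff xy(1,2) in blast)+
    with separating xy gen show False by blast
  qed
  then show ?thesis by (auto simp flip: card_of_ordLeq)
qed

lemma separable_LMP_card_space_Times_less:
  assumes "separable_LMP M tau"
  shows "|space M \<times> space M| <o |Field continuum_succ|"
proof -
  let ?C = "UNIV :: (nat \<Rightarrow> bool) set"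
  have "|space M| \<le>o |?C|"
    using assms unfolding separable_LMP_def
    by (elim conjE exE) (rule card_space_le_continuum; assumption)
  then have "|space M \<times> space M| \<le>o |?C \<times> ?C|"
    using ordLeq_transitive card_of_Times_mono1 card_of_Times_mono2 by blast
  moreover have "infinite ?C"
    by (rule infinite_super[OF subset_UNIV range_inj_infinite[of "\<lambda>n m. m = n"]])
      (rule injI, metis)
  then have "|?C \<times> ?C| =o |?C|" by (rule card_of_Times_same_infinite)
  moreover have "|?C| <o continuum_succ"
    unfolding continuum_succ_def by (rule cardSuc_greater[OF card_of_Card_order])
  moreover have "continuum_succ =o |Field continuum_succ|"
    unfolding continuum_succ_def
    by (rule ordIso_symmetric[OF card_of_Field_ordIso[OF cardSuc_Card_order[OF card_of_Card_order]]])
  ultimately show ?thesis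
    using ordLeq_ordLess_trans ordIso_ordLess_trans ordLess_ordIso_trans by metis
qed

theorem lemma4p5:
  fixes M :: "'s measure" and tau :: "'l::countable \<Rightarrow> 's \<Rightarrow> 's measure"
  assumes "separable_LMP M tau"
  shows "\<exists>w :: (nat \<Rightarrow> bool) set rel. Well_order w \<and> (w, continuum_succ) \<in> ordLeq \<and>
           Opow M tau w (event_bisim M tau) = state_bisim M tau"
proof -
  have W: "Well_order continuum_succ"
    unfolding continuum_succ_def
    by (rule card_order_on_well_order_on[OF cardSuc_Card_order[OF card_of_Card_order]])
  have "LMP M tau" using assms unfolding separable_LMP_def by blast
  from Opow_event_bisim_eq_state_bisim[OF this W separable_LMP_card_space_Times_less[OF assms]]
  show ?thesis using W ordLeq_reflexive[OF W] by blast
qed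

end
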